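(* Let $(G_n)$ be a sequence of directed graphs, $G_n$ on vertex set $\{D\}\cup[n]$, in which every participant is reachable from $D$, and let $b_n$ be the maximum out-degree of $G_n$. If $b_n=O((\log n)^{1/2-\epsilon})$ for some $\epsilon>0$, then $\Gamma_{\text{sota}}(G_n)/n\to\infty$ as $n\to\infty$.
   Context: For a directed graph $G$ on $\{D\}\cup[n]$ with dealer $D$ and integer $k\ge 2$, let $\mathcal N(D)$ be the set of out-neighbours of $D$. For a participant $i$ and integer $w\ge k$, let $\ell_w(D\to i)$ be the minimum, over all families of $w$ internally vertex-disjoint directed paths from $D$ to $i$, of the average length (number of edges) of the paths in the family, with $\ell_w(D\to i)=\infty$ if no such family exists. The communication complexity of the state-of-the-art (separate secure transmissions) scheme is $$\Gamma_{\text{sota}}(G)=|\mathcal N(D)|+\sum_{i\notin\mathcal N(D)}\min_{w\ge k}\Big[\frac{w}{w-k+1}\,\ell_w(D\to i)\Big].$$ *)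

theory Defs
  imports "HOL-Analysis.Analysis" "HOL-Library.Landau_Symbols"
begin

text \<open>A directed graph on the vertex set {D} \<union> [n] is encoded as an edge set
  E :: (nat \<times> nat) set with E \<subseteq> {0..n} \<times> {0..n}; the dealer D is vertex 0
  and the participants are 1..n.\<close>

definition dealer :: nat where "dealer = 0"

definition is_digraph :: "nat \<Rightarrow> (nat \<times> nat) set \<Rightarrow> bool" where
  "is_digraph n E \<longleftrightarrow> E \<subseteq> {0..n} \<times> {0..n}"

definition dealer_nbrs :: "nat \<Rightarrow> (nat \<times> nat) set \<Rightarrow> nat set" where
  "dealer_nbrs n E = {v \<in> {1..n}. (dealer, v) \<in> E}"

definition out_deg :: "(nat \<times> nat) set \<Rightarrow> nat \<Rightarrow> nat" where
  "out_deg E u = card {v. (u, v) \<in> E}"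

definition max_out_deg :: "nat \<Rightarrow> (nat \<times> nat) set \<Rightarrow> nat" where
  "max_out_deg n E = Max (out_deg E ` {0..n})"

definition is_dpath :: "(nat \<times> nat) set \<Rightarrow> nat \<Rightarrow> nat \<Rightarrow> nat list \<Rightarrow> bool" where
  "is_dpath E a b p \<longleftrightarrow> p \<noteq> [] \<and> hd p = a \<and> last p = b \<and> distinct p \<and>
     (\<forall>j. Suc j < length p \<longrightarrow> (p ! j, p ! Suc j) \<in> E)"

definition path_len :: "nat list \<Rightarrow> nat" where
  "path_len p = length p - 1"

definition interior :: "nat list \<Rightarrow> nat set" where
  "interior p = set (butlast (tl p))"

definition disjoint_family :: "(nat \<times> nat) set \<Rightarrow> nat \<Rightarrow> nat \<Rightarrow> nat list list \<Rightarrow> bool" where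
  "disjoint_family E i w ps \<longleftrightarrow> length ps = w \<and>
     (\<forall>p \<in> set ps. is_dpath E dealer i p) \<and>
     (\<forall>j < w. \<forall>j' < w. j \<noteq> j' \<longrightarrow> interior (ps ! j) \<inter> interior (ps ! j') = {})"

text \<open>\<ell>_w(D \<rightarrow> i): minimum average length; \<infinity> if no such family (Inf of empty set).\<close>
definition ell :: "(nat \<times> nat) set \<Rightarrow> nat \<Rightarrow> nat \<Rightarrow> ereal" where
  "ell E w i = Inf {ereal ((\<Sum>p\<leftarrow>ps. real (path_len p)) / real w) | ps. disjoint_family E i w ps}"

definition Gamma_sota :: "nat \<Rightarrow> nat \<Rightarrow> (nat \<times> nat) set \<Rightarrow> ereal" where
  "Gamma_sota k n E = ereal (real (card (dealer_nbrs n E))) +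
     (\<Sum>i \<in> {1..n} - dealer_nbrs n E.
        Inf {ereal (real w / real (w - k + 1)) * ell E w i | w. w \<ge> k})"

end

theory Submission
  imports Defs "HOL-Real_Asymp.Real_Asymp"
begin

(* Let B_d be the set of vertices reachable from the dealer by a walk of
   length at most d.  With maximum out-degree b we have |B_d| \<le> (b+1)^d.  A participant
   outside B_d has every D-path of length > d, so each average path length \<ell>_w, and
   hence each term of \<Gamma>_sota (whose prefactor w/(w-k+1) is \<ge> 1), is at least d.
   Out-neighbours of D lie in B_1 \<subseteq> B_d, so \<Gamma>_sota(G) \<ge> d (n - |B_d|).
   If b_n = O(log n) -- implied by b_n = O((log n)^(1/2-\<epsilon>)) -- then for every fixed d
   eventually (b_n+1)^d \<le> n/2, so \<Gamma>_sota(G_n)/n \<ge> d/2 eventually; as d is arbitrary,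
   the ratio tends to \<infinity>. *)

fun reach_ball :: "(nat \<times> nat) set \<Rightarrow> nat \<Rightarrow> nat \<Rightarrow> nat set" where
  "reach_ball E s 0 = {s}"
| "reach_ball E s (Suc d) = reach_ball E s d \<union> {v. \<exists>u\<in>reach_ball E s d. (u, v) \<in> E}"

lemma ball_subset_vertices:
  assumes "is_digraph n E" "s \<le> n"
  shows "reach_ball E s d \<subseteq> {0..n}"
  using assms by (induction d) (auto simp: is_digraph_def)

lemma ball_mono:
  assumes "d \<le> d'"
  shows "reach_ball E s d \<subseteq> reach_ball E s d'"
  using assms by (induction d' rule: dec_induct) auto

text \<open>Each step multiplies the ball size by at most \<open>b + 1\<close>, where \<open>b\<close> is the maximum
  out-degree: the new vertices are out-neighbours of old ones.\<close>
lemma card_ball_le: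
  assumes g: "is_digraph n E" and s: "s \<le> n"
  shows "card (reach_ball E s d) \<le> (max_out_deg n E + 1) ^ d"
proof (induction d)
  case 0
  then show ?case by simp
next
  case (Suc d)
  let ?b = "max_out_deg n E" and ?B = "reach_ball E s d"
  let ?new = "{v. \<exists>u\<in>?B. (u, v) \<in> E}"
  have fin: "finite ?B"
    using ball_subset_vertices[OF g s] finite_subset by blast
  have deg: "card {v. (u, v) \<in> E} \<le> ?b" if "u \<in> ?B" for u
  proof -
    have "u \<in> {0..n}" using that ball_subset_vertices[OF g s] by blast
    then show ?thesis unfolding max_out_deg_def out_deg_def by (intro Max_ge) auto
  qed
  have "?new = (\<Union>u\<in>?B. {v. (u, v) \<in> E})" by auto
  then have "card ?new \<le> (\<Sum>u\<in>?B. card {v. (u, v) \<in> E})"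
    using card_UN_le[OF fin] by simp
  also have "\<dots> \<le> card ?B * ?b"
    using sum_mono[of ?B "\<lambda>u. card {v. (u, v) \<in> E}" "\<lambda>_. ?b"] deg by simp
  finally have "card ?new \<le> card ?B * ?b" .
  then have "card (reach_ball E s (Suc d)) \<le> card ?B * (?b + 1)"
    using card_Un_le[of ?B ?new] by simp
  also have "\<dots> \<le> (?b + 1) ^ d * (?b + 1)"
    using Suc by (intro mult_right_mono) auto
  finally show ?case by (simp add: mult.commute)
qed

lemma dpath_end_in_ball:
  assumes p: "is_dpath E s i p"
  shows "i \<in> reach_ball E s (path_len p)"
proof -
  have prefix: "p ! j \<in> reach_ball E s j" if "j < length p" for j
    using that
  proof (induction j)
    case 0
    then show ?case using p unfolding is_dpath_def by (auto simp: hd_conv_nth)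
  next
    case (Suc j)
    then have "p ! j \<in> reach_ball E s j" "(p ! j, p ! Suc j) \<in> E"
      using p unfolding is_dpath_def by auto
    then show ?case by auto
  qed
  have "p \<noteq> []" "last p = i" using p unfolding is_dpath_def by auto
  then show ?thesis
    using prefix[of "length p - 1"] unfolding path_len_def by (simp add: last_conv_nth)
qed

lemma ell_ge_radius:
  assumes far: "i \<notin> reach_ball E dealer d" and w: "w \<ge> 1"
  shows "ereal (real d) \<le> ell E w i"
  unfolding ell_def
proof (rule Inf_greatest, clarify)
  fix ps assume fam: "disjoint_family E i w ps"
  have long: "real d \<le> real (path_len p)" if "p \<in> set ps" for p
  proof -
    have "is_dpath E dealer i p" using fam that unfolding disjoint_family_def by auto
    then have "i \<in> reach_ball E dealer (path_len p)" by (rule dpath_end_in_ball)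
    then have "\<not> path_len p \<le> d" using far ball_mono by blast
    then show ?thesis by simp
  qed
  have "real w * real d = (\<Sum>p\<leftarrow>ps. real d)"
    using fam unfolding disjoint_family_def by (simp add: sum_list_triv)
  also have "\<dots> \<le> (\<Sum>p\<leftarrow>ps. real (path_len p))"
    using long by (intro sum_list_mono) auto
  finally show "ereal (real d) \<le> ereal ((\<Sum>p\<leftarrow>ps. real (path_len p)) / real w)"
    using w by (simp add: field_simps)
qed

text \<open>The same bound holds for the per-participant term of \<open>\<Gamma>_sota\<close>, because its
  prefactor \<open>w/(w-k+1)\<close> is at least 1.\<close>
lemma sota_term_ge_radius:
  assumes far: "i \<notin> reach_ball E dealer d" and k: "k \<ge> 2"
  shows "ereal (real d) \<le> Inf {ereal (real w / real (w - k + 1)) * ell E w i | w. w \<ge> k}"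
proof (rule Inf_greatest, clarify)
  fix w assume w: "k \<le> w"
  have ell: "ereal (real d) \<le> ell E w i" using ell_ge_radius[OF far] w k by auto
  have "1 \<le> real w / real (w - k + 1)" using w k by (simp add: field_simps)
  then have "1 * ell E w i \<le> ereal (real w / real (w - k + 1)) * ell E w i"
    using ell order_trans[OF _ ell] by (intro ereal_mult_right_mono) auto
  then show "ereal (real d) \<le> ereal (real w / real (w - k + 1)) * ell E w i"
    using ell by simp
qed

lemma Gamma_sota_ge_ball:
  assumes g: "is_digraph n E" and k: "k \<ge> 2" and d: "d \<ge> 1"
  shows "ereal (real d * (real n - real (card (reach_ball E dealer d)))) \<le> Gamma_sota k n E"
proof -
  let ?N = "dealer_nbrs n E" and ?B = "reach_ball E dealer d"
  let ?S = "{1..n} - ?N"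
  let ?T = "\<lambda>i. Inf {ereal (real w / real (w - k + 1)) * ell E w i | w. w \<ge> k}"
  have nbrs_in_ball: "?N \<subseteq> ?B"
    using ball_mono[OF d, of E dealer] unfolding dealer_nbrs_def dealer_def by auto
  have fin: "finite ?B"
    using ball_subset_vertices[OF g] finite_subset unfolding dealer_def by blast
  \<comment> \<open>every participant term is nonnegative (radius 0: participants differ from D)\<close>
  have nonneg: "0 \<le> ?T i" if "i \<in> {1..n}" for i
    using sota_term_ge_radius[OF _ k, of i E 0] that by (simp add: dealer_def zero_ereal_def)
  have "real n - real (card ?B) \<le> real (card {1..n} - card ?B)"
    by simp
  also have "\<dots> \<le> real (card ({1..n} - ?B))"
    using diff_card_le_card_Diff[OF fin, of "{1..n}"] by linarith
  finally have "real n - real (card ?B) \<le> real (card ({1..n} - ?B))" .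
  then have "real d * (real n - real (card ?B)) \<le> real d * real (card ({1..n} - ?B))"
    by (intro mult_left_mono) auto
  then have "ereal (real d * (real n - real (card ?B))) \<le> ereal (\<Sum>i\<in>{1..n} - ?B. real d)"
    by (simp add: mult.commute)
  also have "\<dots> = (\<Sum>i\<in>{1..n} - ?B. ereal (real d))" by simp
  also have "\<dots> \<le> (\<Sum>i\<in>{1..n} - ?B. ?T i)"
    using sota_term_ge_radius[OF _ k] by (intro sum_mono) auto
  also have "\<dots> \<le> (\<Sum>i\<in>?S. ?T i)"
    using nbrs_in_ball nonneg by (intro sum_mono2) auto
  also have "\<dots> \<le> ereal (real (card ?N)) + (\<Sum>i\<in>?S. ?T i)"
    by (simp add: add_increasing)
  finally show ?thesis unfolding Gamma_sota_def .
qed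

lemma Gamma_sota_ratio_ge:
  assumes g: "is_digraph n E" and k: "k \<ge> 2" and d: "d \<ge> 1" and n: "n > 0"
    and small: "real (card (reach_ball E dealer d)) \<le> real n / 2"
  shows "ereal (real d / 2) \<le> Gamma_sota k n E / ereal (real n)"
proof -
  have "real d * real (card (reach_ball E dealer d)) \<le> real d * (real n / 2)"
    using small by (intro mult_left_mono) auto
  then have "real n * (real d / 2) \<le> real d * (real n - real (card (reach_ball E dealer d)))"
    by (simp add: algebra_simps)
  then have "ereal (real n * (real d / 2)) \<le> Gamma_sota k n E"
    using Gamma_sota_ge_ball[OF g k d] by (meson ereal_less_eq(3) order_trans)
  then show ?thesis using n by (subst ereal_le_divide_pos) auto
qed

lemma log_degree_power_eventually_small:
  fixes b :: "nat \<Rightarrow> nat"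
  assumes "(\<lambda>n. real (b n)) \<in> O(\<lambda>n. ln (real n))"
  shows "eventually (\<lambda>n. (real (b n) + 1) ^ d \<le> real n / 2) at_top"
proof -
  obtain c where c: "c > 0"
    and bound: "eventually (\<lambda>n. norm (real (b n)) \<le> c * norm (ln (real n))) at_top"
    using assms by (rule landau_o.bigE)
  have poly: "eventually (\<lambda>n::nat. (c * ln (real n) + 1) ^ d \<le> real n / 2) at_top"
    using c by real_asymp
  show ?thesis
    using bound poly eventually_ge_at_top[of 1]
  proof eventually_elim
    case (elim n)
    then have "real (b n) + 1 \<le> c * ln (real n) + 1" by simp
    then have "(real (b n) + 1) ^ d \<le> (c * ln (real n) + 1) ^ d"
      by (intro power_mono) auto
    then show ?case using elim by linarith
  qed
qed

theorem mainTheorem8: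
  fixes G :: "nat \<Rightarrow> (nat \<times> nat) set" and k :: nat and \<epsilon> :: real
  assumes "k \<ge> 2"
    and "\<And>n. is_digraph n (G n)"
    and "\<And>n i. i \<in> {1..n} \<Longrightarrow> (dealer, i) \<in> (G n)\<^sup>*"
    and "\<epsilon> > 0"
    and "(\<lambda>n. real (max_out_deg n (G n))) \<in> O(\<lambda>n. ln (real n) powr (1/2 - \<epsilon>))"
  shows "((\<lambda>n. Gamma_sota k n (G n) / ereal (real n)) \<longlongrightarrow> \<infinity>) at_top"
  unfolding tendsto_PInfty
proof
  fix r :: real
  have "(\<lambda>n::nat. ln (real n) powr (1/2 - \<epsilon>)) \<in> O(\<lambda>n. ln (real n))"
    using \<open>\<epsilon> > 0\<close> by real_asymp
  then have deg_log: "(\<lambda>n. real (max_out_deg n (G n))) \<in> O(\<lambda>n. ln (real n))"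
    using assms(5) landau_o.big_trans by blast
  define d where "d = nat \<lceil>2 * r\<rceil> + 1"
  have d: "d \<ge> 1" "r < real d / 2" unfolding d_def using of_nat_ceiling[of "2 * r"] by auto
  show "eventually (\<lambda>n. ereal r < Gamma_sota k n (G n) / ereal (real n)) at_top"
    using log_degree_power_eventually_small[OF deg_log, of d] eventually_gt_at_top[of 0]
  proof eventually_elim
    case (elim n)
    have "real (card (reach_ball (G n) dealer d)) \<le> (real (max_out_deg n (G n)) + 1) ^ d"
      using card_ball_le[OF assms(2), of dealer n d] unfolding dealer_def
      by (metis of_nat_1 of_nat_add of_nat_le_iff of_nat_power zero_le)
    then have "ereal (real d / 2) \<le> Gamma_sota k n (G n) / ereal (real n)"
      using elim by (intro Gamma_sota_ratio_ge assms(1,2) d(1)) auto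
    then show ?case using d(2) by (meson ereal_less_eq(3) le_less_trans not_le)
  qed
qed

end
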